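(* Let $n\ge2$, let $P_1$ be the probability that a given node is isolated in $H^*_{nmF}$ and $P_2$ the probability that two given distinct nodes are both isolated in $H^*_{nmF}$. For each $k$ let $X_k$ be $f^{(k)}$-distributed and let $\phi_1(x)=1-\frac{x1(x\ge2)}{n}$. Assume $\mathbb{E}\phi_1(X_k)>0$ for all $k$. Then \[ \log\frac{P_2}{P_1^2}\ \le\ \sum_{k=1}^m\frac{\operatorname{Var}(\phi_1(X_k))}{(\mathbb{E}\phi_1(X_k))^2}. \]
   Context: Shotgun random hypergraph: given integers $n,m\ge1$ and probability distributions $f^{(1)},\dots,f^{(m)}$ on $\{0,\dots,n\}$, write $F=f^{(1)}\times\cdots\times f^{(m)}$. $H^*_{nmF}$ is the random hypergraph with node set $\{1,\dots,n\}$ and hyperedge set $\{V_1,\dots,V_m\}$, where $V_1,\dots,V_m\subset\{1,\dots,n\}$ are mutually independent and $\mathbb{P}(V_k=A)=f^{(k)}(|A|)\binom{n}{|A|}^{-1}$. A node is isolated if it is not contained in any hyperedge of size at least two. *)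

theory Defs
  imports Complex_Main "HOL-Library.FuncSet"
begin

text \<open>Shotgun random hypergraph H*_{nmF} on the node set {1..n}, as an explicit
finite probability space.  The distributions
f^(k) are given as f k :: nat \<Rightarrow> real (f k j = probability of size j).\<close>

definition configs :: "nat \<Rightarrow> nat \<Rightarrow> (nat \<Rightarrow> nat set) set" where
  "configs n m = PiE {1..m} (\<lambda>_. Pow {1..n})"

definition edge_prob :: "nat \<Rightarrow> (nat \<Rightarrow> real) \<Rightarrow> nat set \<Rightarrow> real" where
  "edge_prob n g A = g (card A) / real (n choose card A)"

text \<open>Probability of a configuration (hyperedges mutually independent).\<close>
definition config_prob :: "nat \<Rightarrow> nat \<Rightarrow> (nat \<Rightarrow> nat \<Rightarrow> real) \<Rightarrow> (nat \<Rightarrow> nat set) \<Rightarrow> real" where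
  "config_prob n m f Vs = (\<Prod>k\<in>{1..m}. edge_prob n (f k) (Vs k))"

definition isolated :: "nat \<Rightarrow> (nat \<Rightarrow> nat set) \<Rightarrow> nat \<Rightarrow> bool" where
  "isolated m Vs v \<longleftrightarrow> (\<forall>k\<in>{1..m}. v \<in> Vs k \<longrightarrow> card (Vs k) < 2)"

definition hg_prob :: "nat \<Rightarrow> nat \<Rightarrow> (nat \<Rightarrow> nat \<Rightarrow> real) \<Rightarrow> ((nat \<Rightarrow> nat set) \<Rightarrow> bool) \<Rightarrow> real" where
  "hg_prob n m f E = (\<Sum>Vs\<in>{Vs\<in>configs n m. E Vs}. config_prob n m f Vs)"

definition is_distr :: "nat \<Rightarrow> (nat \<Rightarrow> real) \<Rightarrow> bool" where
  "is_distr n g \<longleftrightarrow> (\<forall>j\<in>{0..n}. g j \<ge> 0) \<and> (\<Sum>j=0..n. g j) = 1"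

definition phi1 :: "nat \<Rightarrow> nat \<Rightarrow> real" where
  "phi1 n x = 1 - (if x \<ge> 2 then real x else 0) / real n"

definition expect :: "nat \<Rightarrow> (nat \<Rightarrow> real) \<Rightarrow> (nat \<Rightarrow> real) \<Rightarrow> real" where
  "expect n g h = (\<Sum>j=0..n. g j * h j)"

definition variance :: "nat \<Rightarrow> (nat \<Rightarrow> real) \<Rightarrow> (nat \<Rightarrow> real) \<Rightarrow> real" where
  "variance n g h = (\<Sum>j=0..n. g j * (h j - expect n g h)\<^sup>2)"

end

theory Submission
  imports Defs
begin

text \<open>Since the hyperedges are independent, the probability that all nodes of a set S are
isolated factorises over the hyperedges; for a single hyperedge of size j \<ge> 2 it is the
probability \<open>C(n - |S|, j) / C(n, j)\<close> of missing S.  For |S| = 1 this is exactly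
\<open>\<phi>\<^sub>1(j) = 1 - j/n\<close>, and for |S| = 2 it is at most \<open>\<phi>\<^sub>1(j)\<^sup>2\<close>.  Hence
\<open>P\<^sub>2 / P\<^sub>1\<^sup>2 \<le> \<Prod>\<^sub>k E \<phi>\<^sub>1(X\<^sub>k)\<^sup>2 / (E \<phi>\<^sub>1(X\<^sub>k))\<^sup>2 = \<Prod>\<^sub>k (1 + Var \<phi>\<^sub>1(X\<^sub>k) / (E \<phi>\<^sub>1(X\<^sub>k))\<^sup>2)\<close>,
and \<open>ln x \<le> x - 1\<close> finishes the proof.\<close>

lemma hg_prob_forall_edges:
  "hg_prob n m f (\<lambda>Vs. \<forall>k\<in>{1..m}. Q (Vs k)) =
   (\<Prod>k\<in>{1..m}. \<Sum>A\<in>{A\<in>Pow {1..n}. Q A}. edge_prob n (f k) A)"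
proof -
  have "{Vs\<in>configs n m. \<forall>k\<in>{1..m}. Q (Vs k)} = PiE {1..m} (\<lambda>_. {A\<in>Pow {1..n}. Q A})"
    by (rule set_eqI) (simp add: configs_def PiE_iff, blast)
  then show ?thesis
    unfolding hg_prob_def config_prob_def by (simp add: prod_sum_PiE)
qed

lemma sum_edge_prob_by_card:
  assumes "X \<subseteq> Pow {1..n}"
  shows "(\<Sum>A\<in>X. edge_prob n g A) =
    (\<Sum>j=0..n. real (card {A\<in>X. card A = j}) * (g j / real (n choose j)))"
proof -
  have "finite X"
    using assms by (meson finite_Pow_iff finite_atLeastAtMost finite_subset)
  moreover have "card A \<le> n" if "A \<in> X" for A
    using card_mono[of "{1..n}" A] assms that by auto
  then have "card ` X \<subseteq> {0..n}" by auto
  ultimately have "(\<Sum>A\<in>X. edge_prob n g A) =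
      (\<Sum>j=0..n. \<Sum>A\<in>{A\<in>X. card A = j}. edge_prob n g A)"
    by (intro sum.group[symmetric]) auto
  also have "\<dots> = (\<Sum>j=0..n. real (card {A\<in>X. card A = j}) * (g j / real (n choose j)))"
    by (intro sum.cong refl) (simp add: edge_prob_def)
  finally show ?thesis .
qed

text \<open>For a hyperedge drawn uniformly among the j-subsets of {1..n}: the probability that it
isolates a fixed set of s nodes, i.e.\ that it misses the set or has fewer than two elements.\<close>
definition isolation_factor :: "nat \<Rightarrow> nat \<Rightarrow> nat \<Rightarrow> real" where
  "isolation_factor n s j = (if j < 2 then 1 else real ((n - s) choose j) / real (n choose j))"

lemma isolation_factor_nonneg: "isolation_factor n s j \<ge> 0"
  by (simp add: isolation_factor_def)

lemma sum_edge_prob_avoiding_or_small: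
  assumes "S \<subseteq> {1..n}"
  shows "(\<Sum>A\<in>{A\<in>Pow {1..n}. A \<inter> S \<noteq> {} \<longrightarrow> card A < 2}. edge_prob n g A) =
    expect n g (isolation_factor n (card S))"
proof -
  let ?X = "{A\<in>Pow {1..n}. A \<inter> S \<noteq> {} \<longrightarrow> card A < 2}"
  have "(\<Sum>A\<in>?X. edge_prob n g A) =
      (\<Sum>j=0..n. real (card {A\<in>?X. card A = j}) * (g j / real (n choose j)))"
    by (rule sum_edge_prob_by_card) auto
  also have "\<dots> = (\<Sum>j=0..n. g j * isolation_factor n (card S) j)"
  proof (intro sum.cong refl)
    fix j assume "j \<in> {0..n}"
    then have pos: "real (n choose j) > 0" by simp
    show "real (card {A\<in>?X. card A = j}) * (g j / real (n choose j)) =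
        g j * isolation_factor n (card S) j"
    proof (cases "j < 2")
      case True
      then have "{A\<in>?X. card A = j} = {B. B \<subseteq> {1..n} \<and> card B = j}" by auto
      then show ?thesis
        using True pos n_subsets[of "{1..n}" j] by (simp add: isolation_factor_def)
    next
      case False
      then have "{A\<in>?X. card A = j} = {B. B \<subseteq> {1..n} - S \<and> card B = j}" by auto
      moreover have "card ({1..n} - S) = n - card S"
        using assms by (simp add: card_Diff_subset finite_subset)
      ultimately show ?thesis
        using False n_subsets[of "{1..n} - S" j] by (simp add: isolation_factor_def)
    qed
  qed
  finally show ?thesis by (simp add: expect_def)
qed

lemma all_isolated_iff:
  "(\<forall>v\<in>S. isolated m Vs v) \<longleftrightarrow> (\<forall>k\<in>{1..m}. Vs k \<inter> S \<noteq> {} \<longrightarrow> card (Vs k) < 2)"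
  unfolding isolated_def by blast

lemma hg_prob_all_isolated:
  assumes "S \<subseteq> {1..n}"
  shows "hg_prob n m f (\<lambda>Vs. \<forall>v\<in>S. isolated m Vs v) =
    (\<Prod>k\<in>{1..m}. expect n (f k) (isolation_factor n (card S)))"
proof -
  have "hg_prob n m f (\<lambda>Vs. \<forall>v\<in>S. isolated m Vs v) = (\<Prod>k\<in>{1..m}.
      \<Sum>A\<in>{A\<in>Pow {1..n}. A \<inter> S \<noteq> {} \<longrightarrow> card A < 2}. edge_prob n (f k) A)"
    unfolding all_isolated_iff by (rule hg_prob_forall_edges)
  then show ?thesis
    by (simp only: sum_edge_prob_avoiding_or_small[OF assms])
qed

lemma binomial_ratio_pred:
  assumes "j \<le> n"
  shows "real ((n - 1) choose j) / real (n choose j) = 1 - real j / real n"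
proof -
  have "real (n - j) * real (n choose j) = real n * real ((n - 1) choose j)"
    using binomial_absorb_comp[of n j] of_nat_mult by metis
  moreover have "real (n choose j) > 0" using assms by simp
  moreover have "real (n - j) = real n - real j" using assms by simp
  ultimately show ?thesis
    by (cases "n = 0") (simp_all add: field_simps)
qed

text \<open>Removing two nodes costs at least as much as removing one node twice.\<close>
lemma binomial_ratio_minus2_le:
  assumes "j \<le> n"
  shows "real ((n - 2) choose j) / real (n choose j) \<le> (1 - real j / real n)\<^sup>2"
proof (cases "j = n")
  case True
  then show ?thesis by simp
next
  case False
  then have "j \<le> n - 1" "n \<ge> 1" using assms by auto
  have "real ((n - 2) choose j) / real (n choose j) =
      real ((n - 1 - 1) choose j) / real ((n - 1) choose j) *
      (real ((n - 1) choose j) / real (n choose j))"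
    using \<open>j \<le> n - 1\<close> by (simp add: numeral_2_eq_2)
  also have "\<dots> = (1 - real j / (real n - 1)) * (1 - real j / real n)"
    using binomial_ratio_pred[OF \<open>j \<le> n - 1\<close>] binomial_ratio_pred[OF assms] \<open>n \<ge> 1\<close>
    by (simp add: of_nat_diff)
  also have "\<dots> \<le> (1 - real j / real n) * (1 - real j / real n)"
  proof (rule mult_right_mono)
    show "1 - real j / (real n - 1) \<le> 1 - real j / real n"
      using False assms by (cases "j = 0") (auto intro!: divide_left_mono)
    show "0 \<le> 1 - real j / real n" using assms by (auto simp: divide_le_eq_1)
  qed
  finally show ?thesis by (simp add: power2_eq_square)
qed

lemma isolation_factor_one:
  assumes "j \<le> n"
  shows "isolation_factor n 1 j = phi1 n j"
  using binomial_ratio_pred[OF assms] by (simp add: isolation_factor_def phi1_def)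

lemma isolation_factor_two_le:
  assumes "j \<le> n"
  shows "isolation_factor n 2 j \<le> (phi1 n j)\<^sup>2"
  using binomial_ratio_minus2_le[OF assms] by (simp add: isolation_factor_def phi1_def)

lemma expect_cong:
  assumes "\<And>j. j \<le> n \<Longrightarrow> h j = h' j"
  shows "expect n g h = expect n g h'"
  unfolding expect_def using assms by (intro sum.cong) auto

lemma expect_mono:
  assumes "is_distr n g" and "\<And>j. j \<le> n \<Longrightarrow> h j \<le> h' j"
  shows "expect n g h \<le> expect n g h'"
  unfolding expect_def using assms by (intro sum_mono mult_left_mono) (auto simp: is_distr_def)

lemma expect_nonneg:
  assumes "is_distr n g" and "\<And>j. j \<le> n \<Longrightarrow> 0 \<le> h j"
  shows "0 \<le> expect n g h"
  unfolding expect_def using assms by (intro sum_nonneg) (auto simp: is_distr_def)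

lemma variance_eq:
  assumes "is_distr n g"
  shows "variance n g h = expect n g (\<lambda>j. (h j)\<^sup>2) - (expect n g h)\<^sup>2"
proof -
  let ?e = "expect n g h"
  have "variance n g h = (\<Sum>j=0..n. g j * (h j)\<^sup>2 - 2 * ?e * (g j * h j) + ?e\<^sup>2 * g j)"
    unfolding variance_def by (intro sum.cong refl) (simp add: power2_eq_square algebra_simps)
  also have "\<dots> = expect n g (\<lambda>j. (h j)\<^sup>2) - 2 * ?e * ?e + ?e\<^sup>2 * (\<Sum>j=0..n. g j)"
    by (simp add: sum.distrib sum_subtractf sum_distrib_left expect_def)
  finally show ?thesis
    using assms by (simp add: is_distr_def power2_eq_square)
qed

lemma variance_nonneg:
  assumes "is_distr n g"
  shows "variance n g h \<ge> 0"
  using assms unfolding variance_def is_distr_def by (intro sum_nonneg) simp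

text \<open>The junk value \<open>ln 0 = 0\<close> makes the bound hold also when some factor vanishes.\<close>
lemma ln_prod_le_sum_minus_one:
  fixes x y :: "'a \<Rightarrow> real"
  assumes "finite I" and "\<And>i. i \<in> I \<Longrightarrow> 0 \<le> x i" and "\<And>i. i \<in> I \<Longrightarrow> x i \<le> y i"
    and "\<And>i. i \<in> I \<Longrightarrow> 1 \<le> y i"
  shows "ln (\<Prod>i\<in>I. x i) \<le> (\<Sum>i\<in>I. y i - 1)"
proof (cases "\<exists>i\<in>I. x i = 0")
  case True
  then have "(\<Prod>i\<in>I. x i) = 0" using assms(1) by (simp add: prod_zero_iff)
  then show ?thesis using assms(4) by (simp add: sum_nonneg)
next
  case False
  then have pos: "x i > 0" if "i \<in> I" for i
    using assms(2)[OF that] that by fastforce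
  have "ln (\<Prod>i\<in>I. x i) = (\<Sum>i\<in>I. ln (x i))"
    by (rule ln_prod[OF assms(1)]) (metis pos less_irrefl)
  also have "\<dots> \<le> (\<Sum>i\<in>I. y i - 1)"
    using pos assms(3) ln_le_minus_one by (intro sum_mono) force
  finally show ?thesis .
qed

theorem mainTheorem11:
  fixes n m :: nat and f :: "nat \<Rightarrow> nat \<Rightarrow> real" and v u w :: nat
  assumes "n \<ge> 2" and "m \<ge> 1"
    and "\<forall>k\<in>{1..m}. is_distr n (f k)"
    and "\<forall>k\<in>{1..m}. expect n (f k) (phi1 n) > 0"
    and "v \<in> {1..n}" and "u \<in> {1..n}" and "w \<in> {1..n}" and "u \<noteq> w"
  shows "ln (hg_prob n m f (\<lambda>Vs. isolated m Vs u \<and> isolated m Vs w)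
             / (hg_prob n m f (\<lambda>Vs. isolated m Vs v))\<^sup>2)
         \<le> (\<Sum>k=1..m. variance n (f k) (phi1 n) / (expect n (f k) (phi1 n))\<^sup>2)"
proof -
  define a where "a k = expect n (f k) (phi1 n)" for k
  define b where "b k = expect n (f k) (isolation_factor n 2)" for k
  have "hg_prob n m f (\<lambda>Vs. isolated m Vs v) = (\<Prod>k\<in>{1..m}. expect n (f k) (isolation_factor n 1))"
    using hg_prob_all_isolated[of "{v}" n m f] assms(5) by simp
  also have "\<dots> = (\<Prod>k\<in>{1..m}. a k)"
    unfolding a_def by (intro prod.cong expect_cong isolation_factor_one refl)
  finally have P1: "hg_prob n m f (\<lambda>Vs. isolated m Vs v) = (\<Prod>k\<in>{1..m}. a k)" .
  have P2: "hg_prob n m f (\<lambda>Vs. isolated m Vs u \<and> isolated m Vs w) = (\<Prod>k\<in>{1..m}. b k)"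
    using hg_prob_all_isolated[of "{u, w}" n m f] assms(6-8) by (simp add: b_def numeral_2_eq_2)
  have "ln ((\<Prod>k\<in>{1..m}. b k) / (\<Prod>k\<in>{1..m}. a k)\<^sup>2) = ln (\<Prod>k\<in>{1..m}. b k / (a k)\<^sup>2)"
    by (simp add: prod_dividef prod_power_distrib)
  also have "\<dots> \<le> (\<Sum>k=1..m. (1 + variance n (f k) (phi1 n) / (a k)\<^sup>2) - 1)"
  proof (rule ln_prod_le_sum_minus_one)
    fix k assume "k \<in> {1..m}"
    then have g: "is_distr n (f k)" and "a k > 0" using assms(3,4) by (auto simp: a_def)
    then have "b k \<le> expect n (f k) (\<lambda>j. (phi1 n j)\<^sup>2)"
      unfolding b_def by (intro expect_mono isolation_factor_two_le)
    then show "b k / (a k)\<^sup>2 \<le> 1 + variance n (f k) (phi1 n) / (a k)\<^sup>2"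
      using \<open>a k > 0\<close> by (simp add: variance_eq[OF g] a_def field_simps)
    show "0 \<le> b k / (a k)\<^sup>2"
      unfolding b_def using g by (simp add: expect_nonneg isolation_factor_nonneg)
    show "1 \<le> 1 + variance n (f k) (phi1 n) / (a k)\<^sup>2"
      using variance_nonneg[OF g] by simp
  qed simp
  finally show ?thesis by (simp add: P1 P2 a_def)
qed

end
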